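(* Let $d\geq 2$ and $m\geq 1$ be integers. Let $\{e^d_k\}$ and $\{e^{d+m}_k\}$ be the standard bases of $\mathbb{C}^d$ and $\mathbb{C}^{d+m}$, and let $|J\rangle=\sum_{k=1}^d e^d_k\in\mathbb{C}^d$ be the all-ones vector. Define $d\times(d+m)$ matrices $$V_i=\sum_{k=1}^{d}|e^d_k\rangle\langle e^{d+m}_{\mathrm{mod}(k+i-2,\,d+1)+1}|\quad (i=1,\dots,d+1),\qquad V_i=|J\rangle\langle e^{d+m}_i|\quad (i=d+2,\dots,d+m),$$ where $\mathrm{mod}(a,n)\in\{0,\dots,n-1\}$ is the remainder of $a$ modulo $n$, and define the completely positive map $\Phi:M_d\to M_{d+m}$ by $$\Phi(X)=\frac{1}{d(d+m)}\sum_{i=1}^{d+m}V_i^\dagger XV_i .$$ Then $\Phi$ is entanglement breaking.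
   Context: $M_n$ denotes the complex $n\times n$ matrices. A completely positive map $\Phi:M_{d_1}\to M_{d_2}$ is entanglement breaking if $(\mathrm{id}_{M_n}\otimes\Phi)(\rho)$ is separable for every $n$ and every state $\rho$ on $\mathbb{C}^n\otimes\mathbb{C}^{d_1}$; equivalently, its Choi matrix $\sum_{r,s=1}^{d_1}E_{rs}\otimes\Phi(E_{rs})$ is separable. *)

theory Defs
  imports "Jordan_Normal_Form.Matrix" "HOL-Library.Complex_Order"
begin

text \<open>Matrices are complex matrices of type complex mat (Jordan_Normal_Form);
  indices are 0-based.\<close>

definition adj :: "complex mat \<Rightarrow> complex mat" where
  "adj A = mat (dim_col A) (dim_row A) (\<lambda>(i,j). cnj (A $$ (j,i)))"

text \<open>Positive semidefinite n x n matrix: square, and the quadratic form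
  v^* A v is a nonnegative real for every v in C^n (complex order).\<close>
definition psd :: "nat \<Rightarrow> complex mat \<Rightarrow> bool" where
  "psd n A \<longleftrightarrow> A \<in> carrier_mat n n \<and>
     (\<forall>v. dim_vec v = n \<longrightarrow> 0 \<le> (\<Sum>i<n. \<Sum>j<n. cnj (v $ i) * A $$ (i,j) * v $ j))"

definition kron :: "complex mat \<Rightarrow> complex mat \<Rightarrow> complex mat" where
  "kron A B = mat (dim_row A * dim_row B) (dim_col A * dim_col B)
     (\<lambda>(i,j). A $$ (i div dim_row B, j div dim_col B) * B $$ (i mod dim_row B, j mod dim_col B))"

definition msum :: "nat \<Rightarrow> nat \<Rightarrow> ('i \<Rightarrow> complex mat) \<Rightarrow> 'i set \<Rightarrow> complex mat" where
  "msum nr nc f S = mat nr nc (\<lambda>ij. \<Sum>x\<in>S. f x $$ ij)"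

definition separable_op :: "nat \<Rightarrow> nat \<Rightarrow> complex mat \<Rightarrow> bool" where
  "separable_op n1 n2 \<rho> \<longleftrightarrow> (\<exists>(N::nat) A B. (\<forall>k<N. psd n1 (A k) \<and> psd n2 (B k)) \<and>
      \<rho> = msum (n1*n2) (n1*n2) (\<lambda>k. kron (A k) (B k)) {..<N})"

definition matunit :: "nat \<Rightarrow> nat \<Rightarrow> nat \<Rightarrow> complex mat" where
  "matunit n r s = mat n n (\<lambda>(i,j). if i = r \<and> j = s then 1 else 0)"

definition choi :: "nat \<Rightarrow> nat \<Rightarrow> (complex mat \<Rightarrow> complex mat) \<Rightarrow> complex mat" where
  "choi d1 d2 \<Phi> = msum (d1*d2) (d1*d2) (\<lambda>(r,s). kron (matunit d1 r s) (\<Phi> (matunit d1 r s)))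
      ({..<d1} \<times> {..<d1})"

definition entanglement_breaking :: "nat \<Rightarrow> nat \<Rightarrow> (complex mat \<Rightarrow> complex mat) \<Rightarrow> bool" where
  "entanglement_breaking d1 d2 \<Phi> \<longleftrightarrow> separable_op d1 d2 (choi d1 d2 \<Phi>)"

definition ket_bra :: "complex vec \<Rightarrow> complex vec \<Rightarrow> complex mat" where
  "ket_bra u v = mat (dim_vec u) (dim_vec v) (\<lambda>(a,b). u $ a * cnj (v $ b))"

definition ones_vec :: "nat \<Rightarrow> complex vec" where
  "ones_vec d = vec d (\<lambda>_. 1)"

text \<open>V_i with 0-based index i = 0..d+m-1 (paper's i+1). For paper index i \<le> d+1 and
  paper row index k, the column is mod(k+i-2,d+1)+1 (1-based), i.e. (k'+i') mod (d+1)
  0-based.\<close>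
definition Vop :: "nat \<Rightarrow> nat \<Rightarrow> nat \<Rightarrow> complex mat" where
  "Vop d m i = (if i \<le> d then
       msum d (d+m) (\<lambda>k. ket_bra (unit_vec d k) (unit_vec (d+m) ((k+i) mod (d+1)))) {..<d}
     else ket_bra (ones_vec d) (unit_vec (d+m) i))"

definition Phi :: "nat \<Rightarrow> nat \<Rightarrow> complex mat \<Rightarrow> complex mat" where
  "Phi d m X = (1 / (of_nat d * of_nat (d+m))) \<cdot>\<^sub>m
     msum (d+m) (d+m) (\<lambda>i. adj (Vop d m i) * X * Vop d m i) {..<d+m}"

end

theory Submission
  imports Defs
begin

(* The entry of the Choi matrix of Phi in row (r, a) and column (s, b) is Phi(E_rs)_ab.
   For i <= d the operator V_i sends the basis vector of index a to e_k exactly when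
   a = (k + i) mod (d + 1), and for i > d it sends e_i to the all-ones vector, so this entry is,
   up to the factor 1 / (d (d + m)),
     [a, b <= d and a - r = b - s mod d + 1]  +  [a = b > d].
   The second term is the entry of the sum over i > d of J (x) |e_i><e_i|, a sum of products of
   positive semidefinite matrices.  The first term only depends on a - r and b - s modulo d + 1,
   and expanding it in the characters chi_k(a) = exp(2 pi i k a / (d + 1)) of Z/(d + 1) writes it
   as the (r, a), (s, b) entry of 1/(d + 1) times the sum over k of |chi_-k><chi_-k| (x) |chi_k><chi_k|;
   comparing entries is the orthogonality of characters. *)

lemma psd_carrier: "psd n A \<Longrightarrow> A \<in> carrier_mat n n"
  by (simp add: psd_def)

lemma psd_ket_bra: "psd (dim_vec u) (ket_bra u u)"
  unfolding psd_def
proof (intro conjI allI impI)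
  show "ket_bra u u \<in> carrier_mat (dim_vec u) (dim_vec u)"
    by (simp add: ket_bra_def)
next
  fix v :: "complex vec"
  assume "dim_vec v = dim_vec u"
  define S where "S = (\<Sum>i<dim_vec u. cnj (v $ i) * u $ i)"
  have "(\<Sum>i<dim_vec u. \<Sum>j<dim_vec u. cnj (v $ i) * ket_bra u u $$ (i, j) * v $ j)
      = (\<Sum>i<dim_vec u. \<Sum>j<dim_vec u. (cnj (v $ i) * u $ i) * cnj (cnj (v $ j) * u $ j))"
    by (intro sum.cong refl) (simp add: ket_bra_def mult_ac)
  also have "\<dots> = S * cnj S"
    by (simp add: S_def sum_product)
  also have "\<dots> = of_real ((norm S)\<^sup>2)"
    by (rule complex_norm_square[symmetric])
  finally show "0 \<le> (\<Sum>i<dim_vec u. \<Sum>j<dim_vec u. cnj (v $ i) * ket_bra u u $$ (i, j) * v $ j)"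
    by (simp add: less_eq_complex_def)
qed

lemma psd_smult:
  assumes "0 \<le> c" "psd n A"
  shows "psd n (c \<cdot>\<^sub>m A)"
  unfolding psd_def
proof (intro conjI allI impI)
  show "c \<cdot>\<^sub>m A \<in> carrier_mat n n"
    using psd_carrier[OF assms(2)] by simp
next
  fix v :: "complex vec"
  assume "dim_vec v = n"
  then have "0 \<le> c * (\<Sum>i<n. \<Sum>j<n. cnj (v $ i) * A $$ (i, j) * v $ j)"
    using assms by (simp add: psd_def)
  also have "\<dots> = (\<Sum>i<n. \<Sum>j<n. cnj (v $ i) * (c \<cdot>\<^sub>m A) $$ (i, j) * v $ j)"
    using assms(2) by (auto simp: psd_def sum_distrib_left mult_ac intro!: sum.cong)
  finally show "0 \<le> \<dots>" .
qed

lemma mult_add_less_mult: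
  fixes r a n1 n2 :: nat
  assumes "r < n1" "a < n2"
  shows "r * n2 + a < n1 * n2"
proof -
  have "r * n2 + a < Suc r * n2" using assms(2) by simp
  also have "\<dots> \<le> n1 * n2" using assms(1) by (intro mult_right_mono) simp_all
  finally show ?thesis .
qed

lemma kron_index:
  assumes "A \<in> carrier_mat n1 n1'" "B \<in> carrier_mat n2 n2'"
    and "r < n1" "s < n1'" "a < n2" "b < n2'"
  shows "kron A B $$ (r * n2 + a, s * n2' + b) = A $$ (r, s) * B $$ (a, b)"
  using assms mult_add_less_mult[of r n1 a n2] mult_add_less_mult[of s n1' b n2']
  by (simp add: kron_def)

lemma eq_mat_prod_indexI:
  assumes "A \<in> carrier_mat (n1 * n2) (n1' * n2')" "B \<in> carrier_mat (n1 * n2) (n1' * n2')"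
    and "\<And>r s a b. r < n1 \<Longrightarrow> s < n1' \<Longrightarrow> a < n2 \<Longrightarrow> b < n2' \<Longrightarrow>
           A $$ (r * n2 + a, s * n2' + b) = B $$ (r * n2 + a, s * n2' + b)"
  shows "A = B"
proof (rule eq_matI)
  fix i j assume "i < dim_row B" "j < dim_col B"
  then have ij: "i < n1 * n2" "j < n1' * n2'" using assms(2) by auto
  then have "0 < n2" "0 < n2'"
    by (auto intro: gr0I)
  with ij have "i div n2 < n1" "j div n2' < n1'" "i mod n2 < n2" "j mod n2' < n2'"
    by (auto simp: less_mult_imp_div_less)
  then show "A $$ (i, j) = B $$ (i, j)"
    using assms(3)[of "i div n2" "j div n2'" "i mod n2" "j mod n2'"] by simp
qed (use assms in auto)

lemma msum_carrier: "msum nr nc f S \<in> carrier_mat nr nc"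
  by (simp add: msum_def)

lemma matunit_carrier: "matunit n r s \<in> carrier_mat n n"
  by (simp add: matunit_def)

lemma matunit_dim [simp]: "dim_row (matunit n r s) = n" "dim_col (matunit n r s) = n"
  by (simp_all add: matunit_def)

lemma matunit_index:
  "i < n \<Longrightarrow> j < n \<Longrightarrow> matunit n r s $$ (i, j) = (if i = r \<and> j = s then 1 else 0)"
  by (simp add: matunit_def)

lemma choi_carrier: "choi n1 n2 \<Phi> \<in> carrier_mat (n1 * n2) (n1 * n2)"
  by (simp add: choi_def msum_carrier)

lemma choi_index:
  assumes "\<And>X. \<Phi> X \<in> carrier_mat n2 n2"
    and "r < n1" "s < n1" "a < n2" "b < n2"
  shows "choi n1 n2 \<Phi> $$ (r * n2 + a, s * n2 + b) = \<Phi> (matunit n1 r s) $$ (a, b)"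
proof -
  have "choi n1 n2 \<Phi> $$ (r * n2 + a, s * n2 + b)
      = (\<Sum>rs\<in>{..<n1} \<times> {..<n1}.
           (case rs of (r', s') \<Rightarrow> kron (matunit n1 r' s') (\<Phi> (matunit n1 r' s')))
             $$ (r * n2 + a, s * n2 + b))"
    using assms mult_add_less_mult[of r n1 a n2] mult_add_less_mult[of s n1 b n2]
    by (simp add: choi_def msum_def)
  also have "\<dots> = (\<Sum>rs\<in>{..<n1} \<times> {..<n1}.
                      if rs = (r, s) then \<Phi> (matunit n1 r s) $$ (a, b) else 0)"
    using assms by (intro sum.cong refl)
      (auto simp: kron_index[OF matunit_carrier assms(1)] matunit_index split: if_splits)
  finally show ?thesis
    using assms by simp
qed

lemma adj_matunit_sandwich_index:
  assumes "V \<in> carrier_mat n k" "r < n" "s < n" "a < k" "b < k"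
  shows "(adj V * matunit n r s * V) $$ (a, b) = cnj (V $$ (r, a)) * V $$ (s, b)"
proof -
  have "(adj V * matunit n r s * V) $$ (a, b)
      = (\<Sum>l<n. (\<Sum>i<n. cnj (V $$ (i, a)) * matunit n r s $$ (i, l)) * V $$ (l, b))"
    using assms by (simp add: adj_def scalar_prod_def atLeast0LessThan)
  also have "\<dots> = (\<Sum>l<n. if l = s then cnj (V $$ (r, a)) * V $$ (l, b) else 0)"
    using assms(2) by (intro sum.cong refl) (auto simp: matunit_index if_distrib[of "(*) _"] cong: if_cong)
  also have "\<dots> = cnj (V $$ (r, a)) * V $$ (s, b)"
    using assms(3) by simp
  finally show ?thesis .
qed

lemma cis_eq_1_iff: "cis t = 1 \<longleftrightarrow> (\<exists>i::int. t = 2 * pi * of_int i)"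
proof -
  have "cis t = 1 \<longleftrightarrow> cos t = 1"
    by (auto simp: complex_eq_iff cos_one_sin_zero)
  then show ?thesis
    by (auto simp: cos_one_2pi_int mult_ac)
qed

lemma sum_cis_multiples:
  fixes j :: int
  assumes "0 < n"
  shows "(\<Sum>k<n. cis (2 * pi * real k * j / n)) = (if int n dvd j then of_nat n else 0)"
proof -
  define z where "z = cis (2 * pi * j / n)"
  have powers: "cis (2 * pi * real k * j / n) = z ^ k" for k
    by (simp add: z_def DeMoivre mult_ac)
  have "z ^ n = cis (2 * pi * j)"
    using assms by (simp add: z_def DeMoivre)
  then have "z ^ n = 1"
    by simp
  have "z = 1 \<longleftrightarrow> int n dvd j"
  proof -
    have "z = 1 \<longleftrightarrow> (\<exists>i::int. real_of_int j = real n * of_int i)"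
      using assms by (simp add: z_def cis_eq_1_iff field_simps)
    also have "\<dots> \<longleftrightarrow> (\<exists>i::int. j = int n * i)"
      by (metis of_int_eq_iff of_int_mult of_int_of_nat_eq)
    finally show ?thesis
      by (simp add: dvd_def)
  qed
  then show ?thesis
    using \<open>z ^ n = 1\<close> by (auto simp: powers geometric_sum)
qed

lemma nat_mod_eq_iff_int_dvd: "x mod n = y mod n \<longleftrightarrow> int n dvd int x - int y"
proof -
  have "x mod n = y mod n \<longleftrightarrow> int x mod int n = int y mod int n"
    by (simp flip: of_nat_mod)
  also have "\<dots> \<longleftrightarrow> int n dvd int x - int y"
    by (rule mod_eq_dvd_iff)
  finally show ?thesis .
qed

lemma sum_common_shift_indicator:
  fixes n r s a b :: nat
  assumes "r < n" "s < n"
  shows "(\<Sum>i<n. of_bool (a = (r + i) mod n \<and> b = (s + i) mod n) :: 'a::comm_semiring_1)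
       = of_bool (a < n \<and> b < n \<and> (a + s) mod n = (b + r) mod n)"
proof (cases "a < n \<and> b < n")
  case False
  then have "a \<noteq> (r + i) mod n \<or> b \<noteq> (s + i) mod n" for i
    using assms by auto
  then show ?thesis
    using False by (subst sum.neutral) auto
next
  case True
  define i0 where "i0 = (if r \<le> a then a - r else a + n - r)"
  have "i0 < n"
    using True assms unfolding i0_def by auto
  have "a = (r + i) mod n \<and> b = (s + i) mod n \<longleftrightarrow> i = i0 \<and> (a + s) mod n = (b + r) mod n"
    if "i < n" for i
  proof -
    have mods: "(r + i) mod n = (if r + i < n then r + i else r + i - n)"
      "(s + i) mod n = (if s + i < n then s + i else s + i - n)"
      "(a + s) mod n = (if a + s < n then a + s else a + s - n)"
      "(b + r) mod n = (if b + r < n then b + r else b + r - n)"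
      using True assms that by (auto simp: le_mod_geq)
    show ?thesis
      unfolding mods i0_def using True assms that by auto
  qed
  then show ?thesis
    using True \<open>i0 < n\<close> by (simp add: of_bool_def cong: if_cong)
qed

lemma sum_diagonal_indicator:
  assumes "finite I"
  shows "(\<Sum>i\<in>I. of_bool (a = i \<and> b = i) :: 'a::comm_semiring_1) = of_bool (a \<in> I \<and> a = b)"
proof -
  have "(\<Sum>i\<in>I. of_bool (a = i \<and> b = i) :: 'a)
      = (\<Sum>i\<in>I. if i = a then of_bool (a = b) else 0)"
    by (intro sum.cong refl) auto
  then show ?thesis
    using assms by simp
qed

lemma Vop_carrier: "Vop d m i \<in> carrier_mat d (d + m)"
  by (simp add: Vop_def msum_def ket_bra_def ones_vec_def)

lemma Vop_index:
  assumes "k < d" "c < d + m"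
  shows "Vop d m i $$ (k, c) = (if (if i \<le> d then c = (k + i) mod (d + 1) else c = i) then 1 else 0)"
proof (cases "i \<le> d")
  case True
  have "Vop d m i $$ (k, c)
      = (\<Sum>k'<d. (if k = k' then 1 else 0) * cnj (if c = (k' + i) mod (d + 1) then 1 else 0))"
    using True assms by (simp add: Vop_def msum_def ket_bra_def unit_vec_def)
  also have "\<dots> = (\<Sum>k'<d. if k' = k then (if c = (k + i) mod (d + 1) then 1 else 0) else 0)"
    by (intro sum.cong refl) auto
  finally show ?thesis
    using True assms by simp
next
  case False
  then show ?thesis
    using assms by (simp add: Vop_def ket_bra_def ones_vec_def unit_vec_def)
qed

lemma Phi_carrier: "Phi d m X \<in> carrier_mat (d + m) (d + m)"
  by (simp add: Phi_def msum_def)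

lemma Phi_matunit_index:
  assumes "r < d" "s < d" "a < d + m" "b < d + m"
  shows "Phi d m (matunit d r s) $$ (a, b)
       = (\<Sum>i<d + m. if (if i \<le> d then a = (r + i) mod (d + 1) \<and> b = (s + i) mod (d + 1)
                          else a = i \<and> b = i) then 1 else 0) / (of_nat d * of_nat (d + m))"
proof -
  have "Phi d m (matunit d r s) $$ (a, b)
      = (\<Sum>i<d + m. cnj (Vop d m i $$ (r, a)) * Vop d m i $$ (s, b)) / (of_nat d * of_nat (d + m))"
    using assms by (simp add: Phi_def msum_def adj_matunit_sandwich_index[OF Vop_carrier])
  also have "\<dots> = (\<Sum>i<d + m. if (if i \<le> d then a = (r + i) mod (d + 1) \<and> b = (s + i) mod (d + 1)
                                  else a = i \<and> b = i) then 1 else 0) / (of_nat d * of_nat (d + m))"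
    using assms by (intro arg_cong[where f = "\<lambda>x. x / _"] sum.cong refl) (auto simp: Vop_index)
  finally show ?thesis .
qed

lemma choi_Phi_index:
  assumes "0 < m" "r < d" "s < d" "a < d + m" "b < d + m"
  shows "choi d (d + m) (Phi d m) $$ (r * (d + m) + a, s * (d + m) + b)
       = (of_bool (a \<le> d \<and> b \<le> d \<and> (a + s) mod (d + 1) = (b + r) mod (d + 1))
          + of_bool (d < a \<and> a = b)) / (of_nat d * of_nat (d + m))"
proof -
  define f :: "nat \<Rightarrow> complex" where
    "f i = (if (if i \<le> d then a = (r + i) mod (d + 1) \<and> b = (s + i) mod (d + 1)
               else a = i \<and> b = i) then 1 else 0)" for i
  have "choi d (d + m) (Phi d m) $$ (r * (d + m) + a, s * (d + m) + b)
      = sum f {..<d + m} / (of_nat d * of_nat (d + m))"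
    using assms by (simp add: choi_index[OF Phi_carrier] Phi_matunit_index f_def)
  also have "sum f {..<d + m} = sum f {..<d + 1} + sum f {d + 1..<d + m}"
    unfolding lessThan_atLeast0 using assms(1) by (intro sum.atLeastLessThan_concat[symmetric]) simp_all
  also have "sum f {..<d + 1}
      = of_bool (a \<le> d \<and> b \<le> d \<and> (a + s) mod (d + 1) = (b + r) mod (d + 1))"
  proof -
    have "sum f {..<d + 1} = (\<Sum>i<d + 1. of_bool (a = (r + i) mod (d + 1) \<and> b = (s + i) mod (d + 1)))"
      by (intro sum.cong refl) (simp add: f_def)
    also have "\<dots> = of_bool (a < d + 1 \<and> b < d + 1 \<and> (a + s) mod (d + 1) = (b + r) mod (d + 1))"
      using assms by (intro sum_common_shift_indicator) simp_all
    finally show ?thesis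
      by simp
  qed
  also have "sum f {d + 1..<d + m} = of_bool (d < a \<and> a = b)"
  proof -
    have "sum f {d + 1..<d + m} = (\<Sum>i\<in>{d + 1..<d + m}. of_bool (a = i \<and> b = i))"
      by (intro sum.cong refl) (simp add: f_def)
    also have "\<dots> = of_bool (a \<in> {d + 1..<d + m} \<and> a = b)"
      by (rule sum_diagonal_indicator) simp
    finally show ?thesis
      using assms(4) by auto
  qed
  finally show ?thesis .
qed

(* The character chi_j of Z/n, truncated or padded with zeros to length len. *)
definition character_vec :: "nat \<Rightarrow> nat \<Rightarrow> int \<Rightarrow> complex vec" where
  "character_vec n len j = vec len (\<lambda>a. if a < n then cis (2 * pi * j * a / n) else 0)"

definition Phi_sep_left :: "nat \<Rightarrow> nat \<Rightarrow> nat \<Rightarrow> complex mat" where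
  "Phi_sep_left d m k =
     (if k \<le> d
      then (1 / (of_nat d * of_nat (d + m) * of_nat (d + 1))) \<cdot>\<^sub>m
           ket_bra (character_vec (d + 1) d (- int k)) (character_vec (d + 1) d (- int k))
      else (1 / (of_nat d * of_nat (d + m))) \<cdot>\<^sub>m ket_bra (ones_vec d) (ones_vec d))"

definition Phi_sep_right :: "nat \<Rightarrow> nat \<Rightarrow> nat \<Rightarrow> complex mat" where
  "Phi_sep_right d m k =
     (if k \<le> d
      then ket_bra (character_vec (d + 1) (d + m) (int k)) (character_vec (d + 1) (d + m) (int k))
      else ket_bra (unit_vec (d + m) k) (unit_vec (d + m) k))"

lemma psd_Phi_sep_left: "psd d (Phi_sep_left d m k)"
proof -
  have weight: "0 \<le> (1 / of_nat x :: complex)" for x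
    by (simp add: less_eq_complex_def)
  have "psd d (ket_bra (character_vec (d + 1) d (- int k)) (character_vec (d + 1) d (- int k)))"
    "psd d (ket_bra (ones_vec d) (ones_vec d))"
    using psd_ket_bra[of "character_vec (d + 1) d (- int k)"] psd_ket_bra[of "ones_vec d"]
    by (simp_all add: character_vec_def ones_vec_def)
  then show ?thesis
    unfolding Phi_sep_left_def
    by (cases "k \<le> d") (simp_all only: if_True if_False psd_smult[OF weight] flip: of_nat_mult)
qed

lemma psd_Phi_sep_right: "psd (d + m) (Phi_sep_right d m k)"
  using psd_ket_bra[of "character_vec (d + 1) (d + m) (int k)"] psd_ket_bra[of "unit_vec (d + m) k"]
  unfolding Phi_sep_right_def by (simp add: character_vec_def)

lemma Phi_sep_product_index_character:
  assumes "k \<le> d" "r < d" "s < d" "a < d + m" "b < d + m"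
  shows "Phi_sep_left d m k $$ (r, s) * Phi_sep_right d m k $$ (a, b)
       = of_bool (a \<le> d \<and> b \<le> d) / (of_nat d * of_nat (d + m) * of_nat (d + 1))
         * cis (2 * pi * real k * (int a + int s - int r - int b) / (d + 1))"
proof -
  have "cis (2 * pi * - k * r / (d + 1)) * cnj (cis (2 * pi * - k * s / (d + 1)))
        * (cis (2 * pi * k * a / (d + 1)) * cnj (cis (2 * pi * k * b / (d + 1))))
      = cis (2 * pi * real k * (int a + int s - int r - int b) / (d + 1))"
    unfolding cis_cnj cis_mult by (rule arg_cong[where f = cis])
      (simp add: add_divide_distrib diff_divide_distrib algebra_simps)
  then show ?thesis
    using assms by (simp add: Phi_sep_left_def Phi_sep_right_def character_vec_def ket_bra_def)
qed

lemma Phi_sep_product_index_unit: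
  assumes "d < k" "r < d" "s < d" "a < d + m" "b < d + m"
  shows "Phi_sep_left d m k $$ (r, s) * Phi_sep_right d m k $$ (a, b)
       = of_bool (a = k \<and> b = k) / (of_nat d * of_nat (d + m))"
  using assms by (simp add: Phi_sep_left_def Phi_sep_right_def ket_bra_def ones_vec_def unit_vec_def)

lemma sum_kron_Phi_sep_index:
  assumes "0 < m" "r < d" "s < d" "a < d + m" "b < d + m"
  shows "msum (d * (d + m)) (d * (d + m))
             (\<lambda>k. kron (Phi_sep_left d m k) (Phi_sep_right d m k)) {..<d + m}
           $$ (r * (d + m) + a, s * (d + m) + b)
       = (of_bool (a \<le> d \<and> b \<le> d \<and> (a + s) mod (d + 1) = (b + r) mod (d + 1))
          + of_bool (d < a \<and> a = b)) / (of_nat d * of_nat (d + m))"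
proof -
  define g where "g k = Phi_sep_left d m k $$ (r, s) * Phi_sep_right d m k $$ (a, b)" for k
  have "msum (d * (d + m)) (d * (d + m))
            (\<lambda>k. kron (Phi_sep_left d m k) (Phi_sep_right d m k)) {..<d + m}
          $$ (r * (d + m) + a, s * (d + m) + b) = sum g {..<d + m}"
    using assms mult_add_less_mult[of r d a "d + m"] mult_add_less_mult[of s d b "d + m"]
    by (simp add: msum_def g_def
        kron_index[OF psd_carrier[OF psd_Phi_sep_left] psd_carrier[OF psd_Phi_sep_right]])
  also have "sum g {..<d + m} = sum g {..<d + 1} + sum g {d + 1..<d + m}"
    unfolding lessThan_atLeast0 using assms(1) by (intro sum.atLeastLessThan_concat[symmetric]) simp_all
  also have "sum g {..<d + 1}
      = of_bool (a \<le> d \<and> b \<le> d \<and> (a + s) mod (d + 1) = (b + r) mod (d + 1))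
        / (of_nat d * of_nat (d + m))"
  proof -
    define j where "j = int a + int s - int r - int b"
    define c :: complex
      where "c = of_bool (a \<le> d \<and> b \<le> d) / (of_nat d * of_nat (d + m) * of_nat (d + 1))"
    have "sum g {..<d + 1} = c * (\<Sum>k<d + 1. cis (2 * pi * real k * j / real (d + 1)))"
      unfolding sum_distrib_left using assms
      by (intro sum.cong) (simp_all add: g_def c_def j_def Phi_sep_product_index_character)
    also have "\<dots> = c * (if int (d + 1) dvd j then of_nat (d + 1) else 0)"
      by (subst sum_cis_multiples) simp_all
    also have "int (d + 1) dvd j \<longleftrightarrow> (a + s) mod (d + 1) = (b + r) mod (d + 1)"
      by (simp add: nat_mod_eq_iff_int_dvd j_def algebra_simps)
    moreover have "of_nat (d + 1) \<noteq> (0 :: complex)"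
      by (simp only: of_nat_eq_0_iff)
    ultimately show ?thesis
      by (simp add: c_def del: of_nat_add of_nat_Suc)
  qed
  also have "sum g {d + 1..<d + m} = of_bool (d < a \<and> a = b) / (of_nat d * of_nat (d + m))"
  proof -
    have "sum g {d + 1..<d + m}
        = (\<Sum>k\<in>{d + 1..<d + m}. of_bool (a = k \<and> b = k)) / (of_nat d * of_nat (d + m))"
      unfolding sum_divide_distrib using assms
      by (intro sum.cong) (simp_all add: g_def Phi_sep_product_index_unit)
    also have "(\<Sum>k\<in>{d + 1..<d + m}. of_bool (a = k \<and> b = k))
        = (of_bool (a \<in> {d + 1..<d + m} \<and> a = b) :: complex)"
      by (rule sum_diagonal_indicator) simp
    finally show ?thesis
      using assms(4) by auto
  qed
  finally show ?thesis
    by (simp add: add_divide_distrib)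
qed

theorem mainTheorem3:
  fixes d m :: nat
  assumes "d \<ge> 2" and "m \<ge> 1"
  shows "entanglement_breaking d (d+m) (Phi d m)"
proof -
  have "0 < m"
    using assms(2) by simp
  have "choi d (d + m) (Phi d m)
      = msum (d * (d + m)) (d * (d + m))
          (\<lambda>k. kron (Phi_sep_left d m k) (Phi_sep_right d m k)) {..<d + m}"
    by (rule eq_mat_prod_indexI[of _ d "d + m" d "d + m"])
      (simp_all add: choi_carrier msum_carrier choi_Phi_index sum_kron_Phi_sep_index \<open>0 < m\<close>)
  then show ?thesis
    unfolding entanglement_breaking_def separable_op_def
    using psd_Phi_sep_left psd_Phi_sep_right by blast
qed

end
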